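(* If $[\gamma]\in J_1$ and $e([\gamma])=0$, then there exists $f\in F^\times$ with $[\gamma]=[f]$ in $J$.
   Context: $p$ odd prime; $F$ a field containing a primitive $p$th root of unity $\xi_p$; $K=F(\sqrt[p]{a})$, $a\in F^\times$, cyclic of degree $p$; $G=\mathrm{Gal}(K/F)=\langle\sigma\rangle$ with $\sigma(\sqrt[p]{a})=\xi_p\sqrt[p]{a}$; $\rho=\sigma-1$. $J=K^\times/K^{\times p}$ as a multiplicative $\mathbb{F}_p[G]$-module, $[\gamma]$ the class of $\gamma$; $J_i=\ker(\rho^i)$. For $[\gamma]\in J_{p-1}$, the index $e([\gamma])\in\mathbb{F}_p$ is defined by $\xi_p^{e([\gamma])}=\sigma(\delta)/\delta$ where $\delta\in K$ is any $p$th root of $N_{K/F}(\gamma)$ (which lies in $K$). *)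

theory Defs
  imports Main "HOL-Computational_Algebra.Primes"
begin

text \<open>Setting. The field K is modelled as the ambient type 'k (class field).
  sigma is a field automorphism of K generating Gal(K/F), of order p;
  F is the fixed field of sigma.\<close>

definition field_aut :: "('k::field \<Rightarrow> 'k) \<Rightarrow> bool" where
  "field_aut \<sigma> \<longleftrightarrow> bij \<sigma> \<and> (\<forall>x y. \<sigma> (x + y) = \<sigma> x + \<sigma> y)
     \<and> (\<forall>x y. \<sigma> (x * y) = \<sigma> x * \<sigma> y) \<and> \<sigma> 1 = 1"

definition fixed_field :: "('k::field \<Rightarrow> 'k) \<Rightarrow> 'k set" where
  "fixed_field \<sigma> = {x. \<sigma> x = x}"

definition normKF :: "('k::field \<Rightarrow> 'k) \<Rightarrow> nat \<Rightarrow> 'k \<Rightarrow> 'k" where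
  "normKF \<sigma> p \<gamma> = (\<Prod>i<p. (\<sigma> ^^ i) \<gamma>)"

definition is_pth_power :: "nat \<Rightarrow> 'k::field \<Rightarrow> bool" where
  "is_pth_power p x \<longleftrightarrow> (\<exists>\<beta>. \<beta> \<noteq> 0 \<and> x = \<beta> ^ p)"

text \<open>[gamma] in J_1 = ker(sigma - 1) on J = K^x/K^{x p}, written multiplicatively:
  sigma(gamma)/gamma is a p-th power.\<close>
definition in_J1 :: "('k::field \<Rightarrow> 'k) \<Rightarrow> nat \<Rightarrow> 'k \<Rightarrow> bool" where
  "in_J1 \<sigma> p \<gamma> \<longleftrightarrow> \<gamma> \<noteq> 0 \<and> is_pth_power p (\<sigma> \<gamma> / \<gamma>)"

text \<open>The index e([gamma]) in F_p, represented by a natural number in {0..<p}: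
  choose delta in K with delta^p = N(gamma); then sigma(delta)/delta = xi^e.\<close>
definition e_index :: "('k::field \<Rightarrow> 'k) \<Rightarrow> 'k \<Rightarrow> nat \<Rightarrow> 'k \<Rightarrow> nat" where
  "e_index \<sigma> \<xi> p \<gamma> =
     (let \<delta> = (SOME \<delta>. \<delta> ^ p = normKF \<sigma> p \<gamma>)
      in SOME k. k < p \<and> \<sigma> \<delta> = \<xi> ^ k * \<delta>)"

end

theory Submission
  imports Defs "HOL-Computational_Algebra.Polynomial"
begin

text \<open>Write \<open>\<sigma> \<gamma> = \<gamma> \<beta>\<^sup>p\<close>. Then \<open>\<sigma>\<^sup>k \<gamma> = \<gamma> N\<^sub>k(\<beta>)\<^sup>p\<close> with the partial norms
  \<open>N\<^sub>k(\<beta>) = \<beta> \<sigma>(\<beta>) \<dots> \<sigma>\<^sup>k\<^sup>-\<^sup>1(\<beta>)\<close> (\<open>normKF \<sigma> k \<beta>\<close>), so \<open>N(\<gamma>)\<close> is the \<open>p\<close>-th power of \<open>\<gamma> \<Prod>\<^sub>k N\<^sub>k(\<beta>)\<close>, and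
  \<open>\<sigma>\<close> multiplies each \<open>p\<close>-th root of \<open>N(\<gamma>)\<close> by \<open>N(\<beta>)\<close>; hence \<open>e([\<gamma>]) = 0\<close> says
  exactly \<open>N(\<beta>) = 1\<close>. By Hilbert's Theorem 90 then \<open>\<beta> = \<sigma>(u)/u\<close> for some \<open>u \<noteq> 0\<close>,
  and \<open>f = \<gamma>/u\<^sup>p\<close> is fixed by \<open>\<sigma>\<close>. For Hilbert 90 the twisted trace
  \<open>\<theta> \<mapsto> \<Sum>\<^sub>k N\<^sub>k(\<beta>) \<sigma>\<^sup>k(\<theta>)\<close> must be nonzero somewhere; on \<open>\<alpha>\<^sup>i\<close> it is \<open>\<alpha>\<^sup>i\<close> times a
  polynomial of degree \<open>< p\<close> evaluated at \<open>\<xi>\<^sup>i\<close>, and such a polynomial cannot vanish at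
  all \<open>p\<close> distinct roots of unity.\<close>

lemma field_aut_add: "field_aut \<sigma> \<Longrightarrow> \<sigma> (x + y) = \<sigma> x + \<sigma> y"
  and field_aut_mult: "field_aut \<sigma> \<Longrightarrow> \<sigma> (x * y) = \<sigma> x * \<sigma> y"
  and field_aut_one: "field_aut \<sigma> \<Longrightarrow> \<sigma> 1 = 1"
  by (simp_all add: field_aut_def)

lemma field_aut_zero: "field_aut \<sigma> \<Longrightarrow> \<sigma> 0 = 0"
  by (metis add.right_neutral add_left_imp_eq field_aut_add)

lemma field_aut_eq_zero_iff: "field_aut \<sigma> \<Longrightarrow> \<sigma> x = 0 \<longleftrightarrow> x = 0"
  by (metis field_aut_zero field_aut_def bij_def inj_eq)

lemma field_aut_power: "field_aut \<sigma> \<Longrightarrow> \<sigma> (x ^ n) = \<sigma> x ^ n"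
  by (induction n) (simp_all add: field_aut_one field_aut_mult)

lemma field_aut_inverse: "field_aut \<sigma> \<Longrightarrow> \<sigma> (inverse x) = inverse (\<sigma> x)"
  by (metis field_aut_eq_zero_iff field_aut_mult field_aut_one inverse_unique
      inverse_zero right_inverse)

lemma field_aut_divide: "field_aut \<sigma> \<Longrightarrow> \<sigma> (x / y) = \<sigma> x / \<sigma> y"
  by (simp add: divide_inverse field_aut_mult field_aut_inverse)

lemma field_aut_sum: "field_aut \<sigma> \<Longrightarrow> \<sigma> (\<Sum>i\<in>A. f i) = (\<Sum>i\<in>A. \<sigma> (f i))"
  by (induction A rule: infinite_finite_induct) (simp_all add: field_aut_zero field_aut_add)

lemma field_aut_prod: "field_aut \<sigma> \<Longrightarrow> \<sigma> (\<Prod>i\<in>A. f i) = (\<Prod>i\<in>A. \<sigma> (f i))"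
  by (induction A rule: infinite_finite_induct) (simp_all add: field_aut_one field_aut_mult)

lemma field_aut_funpow: "field_aut \<sigma> \<Longrightarrow> field_aut (\<sigma> ^^ k)"
  by (induction k) (auto simp: field_aut_def intro: bij_comp)

lemma root_of_unity_power_ne_one:
  fixes \<xi> :: "'k::field"
  assumes "prime p" "\<xi> ^ p = 1" "\<xi> \<noteq> 1" "0 < k" "k < p"
  shows "\<xi> ^ k \<noteq> 1"
proof
  assume "\<xi> ^ k = 1"
  have "coprime k p"
    using assms(1,4,5) by (metis coprime_commute dvd_imp_le prime_imp_coprime not_le)
  then obtain x y where "k * x = p * y + 1"
    using bezout_nat[of k p] assms(4) by auto
  then have "\<xi> ^ (k * x) = \<xi> ^ (p * y + 1)" by simp
  then show False
    using \<open>\<xi> ^ k = 1\<close> assms(2,3) by (simp add: power_add power_mult)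
qed

lemma inj_on_powers_root_of_unity:
  fixes \<xi> :: "'k::field"
  assumes "prime p" "\<xi> ^ p = 1" "\<xi> \<noteq> 1"
  shows "inj_on (\<lambda>i. \<xi> ^ i) {..<p}"
proof -
  have "\<xi> \<noteq> 0" using assms(1,2) by (metis prime_gt_0_nat zero_neq_one zero_power)
  have "i = j" if "i < p" "j < p" "i \<le> j" "\<xi> ^ i = \<xi> ^ j" for i j
  proof -
    have "\<xi> ^ i * \<xi> ^ (j - i) = \<xi> ^ i * 1"
      using that(3,4) by (metis le_add_diff_inverse mult_1_right power_add)
    then have "\<xi> ^ (j - i) = 1" using \<open>\<xi> \<noteq> 0\<close> by simp
    then show "i = j"
      using root_of_unity_power_ne_one[OF assms, of "j - i"] that by linarith
  qed
  then show ?thesis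
    by (intro inj_onI) (metis lessThan_iff nat_le_linear)
qed

lemma root_of_unity_eq_power:
  fixes \<xi> \<zeta> :: "'k::field"
  assumes "prime p" "\<xi> ^ p = 1" "\<xi> \<noteq> 1" "\<zeta> ^ p = 1"
  shows "\<exists>k<p. \<zeta> = \<xi> ^ k"
proof -
  define Q :: "'k poly" where "Q = monom 1 p - 1"
  have "poly Q 0 = -1"
    using prime_gt_0_nat[OF assms(1)] by (simp add: Q_def poly_monom)
  then have "Q \<noteq> 0" by auto
  have "degree Q \<le> p"
    unfolding Q_def by (simp add: degree_diff_le degree_monom_le)
  have roots: "{x. poly Q x = 0} = {x. x ^ p = 1}"
    unfolding Q_def by (simp add: poly_monom)
  have "(\<lambda>i. \<xi> ^ i) ` {..<p} \<subseteq> {x. poly Q x = 0}"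
    unfolding roots
  proof (clarsimp)
    fix i
    have "(\<xi> ^ i) ^ p = (\<xi> ^ p) ^ i" by (simp flip: power_mult add: mult.commute)
    then show "(\<xi> ^ i) ^ p = 1" using assms(2) by simp
  qed
  moreover have "card ((\<lambda>i. \<xi> ^ i) ` {..<p}) = p"
    using card_image[OF inj_on_powers_root_of_unity[OF assms(1-3)]] by simp
  moreover have "card {x. poly Q x = 0} \<le> p"
    using card_poly_roots_bound[OF \<open>Q \<noteq> 0\<close>] \<open>degree Q \<le> p\<close> by simp
  ultimately have "(\<lambda>i. \<xi> ^ i) ` {..<p} = {x. poly Q x = 0}"
    using card_seteq[OF poly_roots_finite[OF \<open>Q \<noteq> 0\<close>]] by simp
  with assms(4) roots show ?thesis by auto
qed

lemma coeffs_vanish_if_vanishing_at_roots_of_unity: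
  fixes \<xi> :: "'k::field" and w :: "nat \<Rightarrow> 'k"
  assumes "prime p" "\<xi> ^ p = 1" "\<xi> \<noteq> 1"
    and vanish: "\<forall>i<p. (\<Sum>k<p. w k * (\<xi> ^ i) ^ k) = 0"
    and "j < p"
  shows "w j = 0"
proof -
  define P where "P = (\<Sum>k<p. monom (w k) k)"
  have "P = 0"
  proof (rule ccontr)
    assume "P \<noteq> 0"
    have "degree P < p"
      unfolding P_def using \<open>j < p\<close>
      by (intro degree_sum_less) (auto intro: le_less_trans[OF degree_monom_le])
    have "(\<lambda>i. \<xi> ^ i) ` {..<p} \<subseteq> {x. poly P x = 0}"
      using vanish by (auto simp: P_def poly_sum poly_monom)
    then have "card ((\<lambda>i. \<xi> ^ i) ` {..<p}) \<le> card {x. poly P x = 0}"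
      by (rule card_mono[OF poly_roots_finite[OF \<open>P \<noteq> 0\<close>]])
    also have "\<dots> \<le> degree P"
      by (rule card_poly_roots_bound[OF \<open>P \<noteq> 0\<close>])
    finally show False
      using \<open>degree P < p\<close> card_image[OF inj_on_powers_root_of_unity[OF assms(1-3)]] by simp
  qed
  then have "coeff P j = 0" by simp
  then show ?thesis
    using \<open>j < p\<close> by (simp add: P_def coeff_sum)
qed

lemma normKF_Suc:
  assumes "field_aut \<sigma>"
  shows "normKF \<sigma> (Suc k) \<beta> = \<beta> * \<sigma> (normKF \<sigma> k \<beta>)"
  unfolding normKF_def
  by (simp add: prod.lessThan_Suc_shift field_aut_prod[OF assms] del: prod.lessThan_Suc)

lemma normKF_nonzero:
  assumes "field_aut \<sigma>" "\<beta> \<noteq> 0"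
  shows "normKF \<sigma> k \<beta> \<noteq> 0"
  using assms field_aut_eq_zero_iff[OF field_aut_funpow[OF assms(1)]]
  by (simp add: normKF_def)

lemma funpow_aut_eq_mult_normKF_power:
  assumes "field_aut \<sigma>" "\<sigma> \<gamma> = \<gamma> * \<beta> ^ n"
  shows "(\<sigma> ^^ k) \<gamma> = \<gamma> * normKF \<sigma> k \<beta> ^ n"
proof (induction k)
  case 0
  then show ?case by (simp add: normKF_def)
next
  case (Suc k)
  then show ?case
    by (simp add: assms normKF_Suc field_aut_mult field_aut_power power_mult_distrib)
qed

lemma prod_normKF_aut_shift:
  assumes "field_aut \<sigma>"
  shows "\<beta> ^ n * \<sigma> (\<Prod>k<n. normKF \<sigma> k \<beta>) = (\<Prod>k<n. normKF \<sigma> k \<beta>) * normKF \<sigma> n \<beta>"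
proof -
  have "\<beta> ^ n * \<sigma> (\<Prod>k<n. normKF \<sigma> k \<beta>) = (\<Prod>k<n. normKF \<sigma> (Suc k) \<beta>)"
    by (simp add: field_aut_prod[OF assms] normKF_Suc[OF assms] prod.distrib)
  also have "\<dots> = (\<Prod>k<Suc n. normKF \<sigma> k \<beta>)"
    by (simp add: prod.lessThan_Suc_shift normKF_def del: prod.lessThan_Suc)
  finally show ?thesis by simp
qed

lemma normKF_eq_power_if_aut_quotient_power:
  assumes "field_aut \<sigma>" "\<sigma> \<gamma> = \<gamma> * \<beta> ^ p"
  shows "normKF \<sigma> p \<gamma> = (\<gamma> * (\<Prod>k<p. normKF \<sigma> k \<beta>)) ^ p"
  unfolding normKF_def[of \<sigma> p \<gamma>] funpow_aut_eq_mult_normKF_power[OF assms]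
  by (simp add: prod.distrib power_mult_distrib prod_power_distrib)

text \<open>Every \<open>p\<close>-th root of \<open>N(\<gamma>)\<close> is \<open>\<gamma> \<Prod>\<^sub>k N\<^sub>k(\<beta>)\<close> up to a power of \<open>\<xi>\<close>, which \<open>\<sigma>\<close> fixes.\<close>
lemma aut_root_of_normKF:
  assumes aut: "field_aut \<sigma>" and "prime p"
    and "\<sigma> \<xi> = \<xi>" "\<xi> ^ p = 1" "\<xi> \<noteq> 1"
    and "\<gamma> \<noteq> 0" "\<beta> \<noteq> 0" and quotient: "\<sigma> \<gamma> = \<gamma> * \<beta> ^ p"
    and root: "\<delta> ^ p = normKF \<sigma> p \<gamma>"
  shows "\<sigma> \<delta> = normKF \<sigma> p \<beta> * \<delta>"
proof -
  define W where "W = (\<Prod>k<p. normKF \<sigma> k \<beta>)"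
  have "\<gamma> * W \<noteq> 0"
    using \<open>\<gamma> \<noteq> 0\<close> normKF_nonzero[OF aut \<open>\<beta> \<noteq> 0\<close>] by (simp add: W_def)
  have "(\<delta> / (\<gamma> * W)) ^ p = 1"
    using root \<open>\<gamma> * W \<noteq> 0\<close>
    by (simp add: power_divide normKF_eq_power_if_aut_quotient_power[OF aut quotient] W_def)
  then obtain m where "\<delta> = \<xi> ^ m * (\<gamma> * W)"
    using root_of_unity_eq_power[OF \<open>prime p\<close> \<open>\<xi> ^ p = 1\<close> \<open>\<xi> \<noteq> 1\<close>] \<open>\<gamma> * W \<noteq> 0\<close>
    by (metis nonzero_eq_divide_eq)
  moreover have "\<sigma> (\<xi> ^ m * (\<gamma> * W)) = \<xi> ^ m * (\<gamma> * (\<beta> ^ p * \<sigma> W))"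
    by (simp add: field_aut_mult[OF aut] field_aut_power[OF aut] \<open>\<sigma> \<xi> = \<xi>\<close> quotient)
  ultimately show ?thesis
    using prod_normKF_aut_shift[OF aut, of \<beta> p] by (simp add: W_def ac_simps)
qed

lemma normKF_eq_power_e_index:
  assumes aut: "field_aut \<sigma>" and "\<sigma> ^^ p = id" and "prime p"
    and "\<sigma> \<xi> = \<xi>" "\<xi> ^ p = 1" "\<xi> \<noteq> 1"
    and "\<gamma> \<noteq> 0" "\<beta> \<noteq> 0" and quotient: "\<sigma> \<gamma> = \<gamma> * \<beta> ^ p"
  shows "normKF \<sigma> p \<beta> = \<xi> ^ e_index \<sigma> \<xi> p \<gamma>"
proof -
  define \<delta> where "\<delta> = (SOME \<delta>. \<delta> ^ p = normKF \<sigma> p \<gamma>)"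
  have "\<delta> ^ p = normKF \<sigma> p \<gamma>"
    unfolding \<delta>_def normKF_eq_power_if_aut_quotient_power[OF aut quotient] by (rule someI, rule refl)
  then have \<sigma>\<delta>: "\<sigma> \<delta> = normKF \<sigma> p \<beta> * \<delta>"
    by (rule aut_root_of_normKF[OF aut \<open>prime p\<close> assms(4-9)])
  have "\<delta> ^ p \<noteq> 0"
    using \<open>\<delta> ^ p = normKF \<sigma> p \<gamma>\<close> normKF_nonzero[OF aut \<open>\<gamma> \<noteq> 0\<close>] by simp
  then have "\<delta> \<noteq> 0" using prime_gt_0_nat[OF \<open>prime p\<close>] by auto
  have "\<gamma> * normKF \<sigma> p \<beta> ^ p = \<gamma> * 1"
    using funpow_aut_eq_mult_normKF_power[OF aut quotient, of p] \<open>\<sigma> ^^ p = id\<close> by simp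
  then have "normKF \<sigma> p \<beta> ^ p = 1"
    using \<open>\<gamma> \<noteq> 0\<close> by simp
  then obtain k where "k < p" "normKF \<sigma> p \<beta> = \<xi> ^ k"
    using root_of_unity_eq_power[OF \<open>prime p\<close> \<open>\<xi> ^ p = 1\<close> \<open>\<xi> \<noteq> 1\<close>] by blast
  with \<sigma>\<delta> have "k < p \<and> \<sigma> \<delta> = \<xi> ^ k * \<delta>" by simp
  then have "e_index \<sigma> \<xi> p \<gamma> < p \<and> \<sigma> \<delta> = \<xi> ^ e_index \<sigma> \<xi> p \<gamma> * \<delta>"
    unfolding e_index_def Let_def \<delta>_def[symmetric] by (rule someI)
  with \<sigma>\<delta> \<open>\<delta> \<noteq> 0\<close> show ?thesis by (metis mult_right_cancel)
qed

lemma aut_twisted_trace: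
  assumes aut: "field_aut \<sigma>" and "\<sigma> ^^ n = id" and "normKF \<sigma> n \<beta> = 1"
  shows "\<beta> * \<sigma> (\<Sum>k<n. normKF \<sigma> k \<beta> * (\<sigma> ^^ k) \<theta>) = (\<Sum>k<n. normKF \<sigma> k \<beta> * (\<sigma> ^^ k) \<theta>)"
proof -
  have "\<beta> * \<sigma> (\<Sum>k<n. normKF \<sigma> k \<beta> * (\<sigma> ^^ k) \<theta>)
      = (\<Sum>k<n. normKF \<sigma> (Suc k) \<beta> * (\<sigma> ^^ Suc k) \<theta>)"
    by (simp add: field_aut_sum[OF aut] field_aut_mult[OF aut] normKF_Suc[OF aut]
        sum_distrib_left ac_simps)
  also have "\<dots> = (\<Sum>k<Suc n. normKF \<sigma> k \<beta> * (\<sigma> ^^ k) \<theta>) - \<theta>"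
    by (simp add: sum.lessThan_Suc_shift normKF_def del: sum.lessThan_Suc)
  also have "\<dots> = (\<Sum>k<n. normKF \<sigma> k \<beta> * (\<sigma> ^^ k) \<theta>)"
    using assms(2,3) by simp
  finally show ?thesis .
qed

text \<open>Linear independence of \<open>id, \<sigma>, \<dots>, \<sigma>\<^sup>p\<^sup>-\<^sup>1\<close>, tested on the eigenvectors \<open>\<alpha>\<^sup>i\<close> of \<open>\<sigma>\<close>.\<close>
lemma aut_powers_independent:
  assumes aut: "field_aut \<sigma>" and "prime p"
    and "\<sigma> \<xi> = \<xi>" "\<xi> ^ p = 1" "\<xi> \<noteq> 1"
    and "\<alpha> \<noteq> 0" "\<sigma> \<alpha> = \<xi> * \<alpha>" and "w 0 \<noteq> 0"
  shows "\<exists>\<theta>. (\<Sum>k<p. w k * (\<sigma> ^^ k) \<theta>) \<noteq> 0"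
proof (rule ccontr)
  assume "\<nexists>\<theta>. (\<Sum>k<p. w k * (\<sigma> ^^ k) \<theta>) \<noteq> 0"
  have "(\<sigma> ^^ k) \<alpha> = \<xi> ^ k * \<alpha>" for k
    by (induction k) (simp_all add: assms(3,7) field_aut_mult[OF aut] field_aut_power[OF aut])
  then have "(\<sigma> ^^ k) (\<alpha> ^ i) = \<alpha> ^ i * (\<xi> ^ i) ^ k" for i k
    by (metis field_aut_power[OF field_aut_funpow[OF aut]] power_mult_distrib
        mult.commute power_mult)
  moreover have "(\<Sum>k<p. w k * (\<sigma> ^^ k) (\<alpha> ^ i)) = 0" for i
    using \<open>\<nexists>\<theta>. _\<close> by blast
  ultimately have "\<alpha> ^ i * (\<Sum>k<p. w k * (\<xi> ^ i) ^ k) = 0" for i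
    by (simp add: sum_distrib_left mult.left_commute)
  then have "\<forall>i<p. (\<Sum>k<p. w k * (\<xi> ^ i) ^ k) = 0"
    using \<open>\<alpha> \<noteq> 0\<close> by simp
  then have "w 0 = 0"
    using coeffs_vanish_if_vanishing_at_roots_of_unity[OF \<open>prime p\<close> assms(4,5)]
      prime_gt_0_nat[OF \<open>prime p\<close>] by blast
  with \<open>w 0 \<noteq> 0\<close> show False ..
qed

lemma hilbert90_cyclic:
  assumes aut: "field_aut \<sigma>" and "\<sigma> ^^ p = id" and "prime p"
    and "\<sigma> \<xi> = \<xi>" "\<xi> ^ p = 1" "\<xi> \<noteq> 1"
    and "\<alpha> \<noteq> 0" "\<sigma> \<alpha> = \<xi> * \<alpha>" and "normKF \<sigma> p \<beta> = 1"
  shows "\<exists>u. u \<noteq> 0 \<and> \<sigma> u = \<beta> * u"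
proof -
  have "normKF \<sigma> 0 \<beta> \<noteq> 0" by (simp add: normKF_def)
  then obtain \<theta> where "(\<Sum>k<p. normKF \<sigma> k \<beta> * (\<sigma> ^^ k) \<theta>) \<noteq> 0"
    using aut_powers_independent[where w = "\<lambda>k. normKF \<sigma> k \<beta>", OF aut assms(3-8)] by blast
  moreover have "\<beta> * \<sigma> (\<Sum>k<p. normKF \<sigma> k \<beta> * (\<sigma> ^^ k) \<theta>)
      = (\<Sum>k<p. normKF \<sigma> k \<beta> * (\<sigma> ^^ k) \<theta>)"
    by (rule aut_twisted_trace[OF aut assms(2,9)])
  ultimately obtain c where "c \<noteq> 0" and c: "\<beta> * \<sigma> c = c" by blast
  then have "\<beta> \<noteq> 0" by auto
  have "\<beta> * inverse c = \<beta> * inverse (\<beta> * \<sigma> c)" by (simp only: c)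
  also have "\<dots> = inverse (\<sigma> c)"
    using \<open>\<beta> \<noteq> 0\<close> by (simp add: inverse_mult_distrib)
  also have "\<dots> = \<sigma> (inverse c)" by (simp add: field_aut_inverse[OF aut])
  finally show ?thesis
    using \<open>c \<noteq> 0\<close> by (metis inverse_nonzero_iff_nonzero)
qed

theorem lemma4:
  fixes \<sigma> :: "'k::field \<Rightarrow> 'k" and \<xi> \<alpha> a \<gamma> :: 'k and p :: nat
  assumes p_prime: "prime p" and p_odd: "odd p"
    and aut: "field_aut \<sigma>"
    and sigma_order: "\<sigma> ^^ p = id" and sigma_nontriv: "\<sigma> \<noteq> id"
    and xi_F: "\<xi> \<in> fixed_field \<sigma>" and xi_root: "\<xi> ^ p = 1" and xi_ne1: "\<xi> \<noteq> 1"
    and a_F: "a \<in> fixed_field \<sigma>" and a_nz: "a \<noteq> 0"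
    and alpha_root: "\<alpha> ^ p = a" and sigma_alpha: "\<sigma> \<alpha> = \<xi> * \<alpha>"
    and generated: "\<forall>x. \<exists>c. (\<forall>i<p. c i \<in> fixed_field \<sigma>) \<and> x = (\<Sum>i<p. c i * \<alpha> ^ i)"
    and J1: "in_J1 \<sigma> p \<gamma>"
    and e0: "e_index \<sigma> \<xi> p \<gamma> = 0"
  shows "\<exists>f \<in> fixed_field \<sigma>. f \<noteq> 0 \<and> is_pth_power p (\<gamma> / f)"
proof -
  have "\<sigma> \<xi> = \<xi>" using xi_F by (simp add: fixed_field_def)
  have "\<alpha> \<noteq> 0" using alpha_root a_nz prime_gt_0_nat[OF p_prime] by auto
  obtain \<beta> where "\<gamma> \<noteq> 0" "\<beta> \<noteq> 0" and quotient: "\<sigma> \<gamma> = \<gamma> * \<beta> ^ p"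
    using J1 by (auto simp: in_J1_def is_pth_power_def divide_eq_eq mult.commute)
  have "normKF \<sigma> p \<beta> = 1"
    using normKF_eq_power_e_index[OF aut sigma_order p_prime \<open>\<sigma> \<xi> = \<xi>\<close> xi_root xi_ne1
        \<open>\<gamma> \<noteq> 0\<close> \<open>\<beta> \<noteq> 0\<close> quotient] e0 by simp
  then obtain u where "u \<noteq> 0" and "\<sigma> u = \<beta> * u"
    using hilbert90_cyclic[OF aut sigma_order p_prime \<open>\<sigma> \<xi> = \<xi>\<close> xi_root xi_ne1
        \<open>\<alpha> \<noteq> 0\<close> sigma_alpha] by blast
  have "\<gamma> / u ^ p \<in> fixed_field \<sigma>"
    using \<open>\<beta> \<noteq> 0\<close> by (simp add: fixed_field_def field_aut_divide[OF aut] field_aut_power[OF aut]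
        quotient \<open>\<sigma> u = \<beta> * u\<close> power_mult_distrib)
  moreover have "\<gamma> / u ^ p \<noteq> 0" using \<open>\<gamma> \<noteq> 0\<close> \<open>u \<noteq> 0\<close> by simp
  moreover have "is_pth_power p (\<gamma> / (\<gamma> / u ^ p))"
    using \<open>\<gamma> \<noteq> 0\<close> \<open>u \<noteq> 0\<close> unfolding is_pth_power_def by auto
  ultimately show ?thesis by blast
qed

end
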